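(* Let $r \ge 2$ be such that $p_{r+1}^2 \ge p_r\#/2$. Then $$\max\{\,p_{r+1}-1,\ d(p_{r+1}^2)\,\} = 2p_{r-1}.$$
   Context: $p_k$ denotes the $k$-th prime ($p_1=2$, $p_2=3$, \dots). For a prime $p$, $p\# = \prod_{q\le p,\ q \text{ prime}} q$. For $r \ge 1$, $d(p_{r+1}^2)$ denotes the maximum of $q'-q$ over all pairs of consecutive primes $q<q'$ with $p_{r+1} \le q < q' \le p_{r+1}^2$ (equivalently, the maximum gap between consecutive integers coprime to $p_r\#$ lying in the interval $[p_{r+1}, p_{r+1}^2]$). *)

theory Defs
  imports "HOL-Computational_Algebra.Primes" "HOL-Library.Infinite_Set"
begin

text \<open>The k-th prime, 1-indexed: nth_prime 1 = 2, nth_prime 2 = 3, ...\<close>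
definition nth_prime :: "nat \<Rightarrow> nat" where
  "nth_prime k = enumerate {p::nat. prime p} (k - 1)"

definition primorial :: "nat \<Rightarrow> nat" where
  "primorial p = (\<Prod>q\<in>{q::nat. prime q \<and> q \<le> p}. q)"

definition max_prime_gap :: "nat \<Rightarrow> nat \<Rightarrow> nat" where
  "max_prime_gap a b = Max {q' - q | q q'. prime q \<and> prime q' \<and> a \<le> q \<and> q < q' \<and> q' \<le> b
       \<and> (\<forall>s. q < s \<and> s < q' \<longrightarrow> \<not> prime s)}"

text \<open>d(p_{r+1}^2) with lower endpoint p_{r+1}.\<close>
definition d_gap :: "nat \<Rightarrow> nat" where
  "d_gap r = max_prime_gap (nth_prime (r+1)) ((nth_prime (r+1))^2)"

end

theory Submission
  imports Defs
begin

text \<open>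
  The hypothesis 2 p(r+1)^2 \<ge> p(r)# only holds for r \<le> 4. Indeed, let Q = p(k)# and
  m = r - k + 1 \<le> p(k+1). The numbers Q i - 1 (1 \<le> i \<le> m) have pairwise distinct prime
  factors larger than p(k), and there are only r - k primes in (p(k), p(r)], so
  p(r+1) < Q m (a Bonse-type inequality). Taking k close to r/2 gives
  2 p(r+1)^2 < 2 Q^2 m^2 < p(r)# for r \<ge> 11, and 5 \<le> r \<le> 10 follows from p(11) = 31.
  For r = 2, 3, 4 every prime gap in [p(r+1), p(r+1)^2] is at most p(r+1) - 1 = 2 p(r-1),
  which is checked directly.
\<close>

lemma prime_nth_prime: "prime (nth_prime k)"
  unfolding nth_prime_def using enumerate_in_set[OF primes_infinite] by simp

lemma nth_prime_less_iff: "1 \<le> i \<Longrightarrow> 1 \<le> j \<Longrightarrow> nth_prime i < nth_prime j \<longleftrightarrow> i < j"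
  unfolding nth_prime_def by (simp add: primes_infinite) linarith

lemma nth_prime_le_iff: "1 \<le> i \<Longrightarrow> 1 \<le> j \<Longrightarrow> nth_prime i \<le> nth_prime j \<longleftrightarrow> i \<le> j"
  unfolding nth_prime_def by (simp add: primes_infinite) linarith

lemma nth_prime_surj:
  assumes "prime q"
  obtains k where "1 \<le> k" "nth_prime k = q"
proof -
  obtain n where "enumerate {p::nat. prime p} n = q"
    using enumerate_Ex[OF primes_infinite] assms by auto
  then show thesis by (intro that[of "Suc n"]) (simp_all add: nth_prime_def)
qed

lemma inj_on_nth_prime: "inj_on nth_prime {1..}"
  by (rule inj_onI) (metis atLeast_iff nat_neq_iff nth_prime_less_iff)

lemma primes_le_nth_prime:
  "1 \<le> r \<Longrightarrow> {q. prime q \<and> q \<le> nth_prime r} = nth_prime ` {1..r}"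
  by (auto simp: prime_nth_prime nth_prime_le_iff elim!: nth_prime_surj)

lemma primes_less_nth_prime:
  "1 \<le> r \<Longrightarrow> {q. prime q \<and> q < nth_prime r} = nth_prime ` {1..<r}"
  by (auto simp: prime_nth_prime nth_prime_less_iff elim!: nth_prime_surj)

lemma card_primes_le_nth_prime: "1 \<le> r \<Longrightarrow> card {q. prime q \<and> q \<le> nth_prime r} = r"
  by (simp add: primes_le_nth_prime card_image inj_on_subset[OF inj_on_nth_prime])

lemma nth_prime_eqI:
  assumes "prime q" and "1 \<le> n" and "card {p. prime p \<and> p < q} = n - 1"
  shows "nth_prime n = q"
proof -
  obtain k where k: "1 \<le> k" "nth_prime k = q" using nth_prime_surj[OF assms(1)] .
  have "card {p. prime p \<and> p < nth_prime k} = k - 1"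
    using k(1) inj_on_subset[OF inj_on_nth_prime, of "{1..<k}"]
    by (simp add: primes_less_nth_prime card_image subset_eq)
  with assms(2,3) k have "n = k" by simp
  with k show ?thesis by simp
qed

lemma card_primes_less: "card {p::nat. prime p \<and> p < q} = length (filter prime [0..<q])"
proof -
  have "{p::nat. prime p \<and> p < q} = set (filter prime [0..<q])" by auto
  then show ?thesis by (metis distinct_card distinct_filter distinct_upt)
qed

lemma nth_prime_values:
  "nth_prime 1 = 2" "nth_prime 2 = 3" "nth_prime 3 = 5" "nth_prime 4 = 7" "nth_prime 5 = 11"
  "nth_prime 11 = 31"
  by (rule nth_prime_eqI; (simp only: card_primes_less)?; code_simp)+

lemma nth_prime_Suc_le:
  assumes "prime q" "nth_prime r < q"
  shows "nth_prime (Suc r) \<le> q"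
proof -
  obtain j where j: "1 \<le> j" "nth_prime j = q" using nth_prime_surj[OF assms(1)] .
  show ?thesis
  proof (cases "r = 0")
    case True
    then show ?thesis using assms(1) nth_prime_values(1) prime_ge_2_nat by simp
  next
    case False
    then show ?thesis
      using j assms(2) nth_prime_less_iff[of r j] nth_prime_le_iff[of "Suc r" j] by auto
  qed
qed

lemma nth_prime_lower_bound: "1 \<le> i \<Longrightarrow> 2 * i - 1 \<le> nth_prime i"
proof (induction i rule: nat_induct_at_least)
  case base
  then show ?case using nth_prime_values(1) by simp
next
  case (Suc n)
  show ?case
  proof (cases "n = 1")
    case True
    then show ?thesis using nth_prime_values(2) by (simp add: numeral_2_eq_2)
  next
    case False
    with Suc have "3 \<le> nth_prime n" using nth_prime_le_iff[of 2 n] nth_prime_values(2) by simp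
    moreover have less: "nth_prime n < nth_prime (Suc n)"
      using nth_prime_less_iff[of n "Suc n"] Suc by simp
    ultimately have "odd (nth_prime n)" "odd (nth_prime (Suc n))"
      using prime_odd_nat prime_nth_prime by auto
    with less have "nth_prime n + 2 \<le> nth_prime (Suc n)"
      by (metis Suc_leI add_2_eq_Suc' even_Suc le_antisym not_less_eq_eq)
    with Suc show ?thesis by simp
  qed
qed

lemma finite_primes_le: "finite {p::nat. prime p \<and> p \<le> n}"
  by (rule finite_subset[of _ "{..n}"]) auto

lemma primorial_pos: "0 < primorial n"
  unfolding primorial_def by (auto intro: prod_pos simp: prime_gt_0_nat)

lemma prime_dvd_primorial_iff:
  assumes "prime p"
  shows "p dvd primorial n \<longleftrightarrow> p \<le> n"
proof
  assume "p dvd primorial n"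
  then obtain q where "prime q" "q \<le> n" "p dvd q"
    using assms by (auto simp: primorial_def prime_dvd_prod_iff[OF finite_primes_le])
  then show "p \<le> n" using primes_dvd_imp_eq[OF assms] by blast
next
  assume "p \<le> n"
  then show "p dvd primorial n"
    using assms unfolding primorial_def by (intro dvd_prodI finite_primes_le) simp
qed

lemma primorial_dvd_primorial: "m \<le> n \<Longrightarrow> primorial m dvd primorial n"
  unfolding primorial_def by (rule prod_dvd_prod_subset[OF finite_primes_le]) auto

lemma primorial_code: "primorial n = prod_list (filter prime [0..<Suc n])"
proof -
  have "{p::nat. prime p \<and> p \<le> n} = set (filter prime [0..<Suc n])"
    by (auto simp del: upt_Suc)
  then have "primorial n = (\<Prod>q\<in>set (filter prime [0..<Suc n]). q)"
    by (simp only: primorial_def)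
  also have "\<dots> = prod_list (filter prime [0..<Suc n])"
    by (subst prod.distinct_set_conv_list) simp_all
  finally show ?thesis .
qed

lemma primorial_nth_prime: "1 \<le> r \<Longrightarrow> primorial (nth_prime r) = (\<Prod>i=1..r. nth_prime i)"
  unfolding primorial_def
  using inj_on_subset[OF inj_on_nth_prime, of "{1..r}"]
  by (simp add: primes_le_nth_prime prod.reindex subset_eq)

text \<open>A prime dividing both \<open>Q i - 1\<close> and \<open>Q j - 1\<close> divides \<open>Q (j - i)\<close>, hence \<open>j - i < m\<close>,
  so the chosen prime factors of \<open>Q i - 1\<close> are distinct.\<close>
lemma card_primes_not_dvd_less:
  fixes Q m :: nat
  assumes Q: "3 \<le> Q" and large: "\<And>p. prime p \<Longrightarrow> \<not> p dvd Q \<Longrightarrow> m \<le> p"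
  shows "m \<le> card {p. prime p \<and> \<not> p dvd Q \<and> p < Q * m}"
proof -
  define f where "f i = (SOME p. prime p \<and> p dvd Q * i - 1)" for i
  have f: "prime (f i) \<and> f i dvd Q * i - 1" if "1 \<le> i" for i
  proof -
    have "Q \<le> Q * i" using that by simp
    then have "Q * i - 1 \<noteq> 1" using Q by linarith
    then show ?thesis unfolding f_def by (rule someI_ex[OF prime_factor_nat])
  qed
  have not_dvd: "\<not> f i dvd Q" if "1 \<le> i" for i
  proof
    assume "f i dvd Q"
    then have "f i dvd Q * i" by simp
    then have "f i dvd Q * i - (Q * i - 1)" using f[OF that] dvd_diff_nat by blast
    moreover have "Q * i - (Q * i - 1) = 1" using Q that by (simp add: Suc_le_eq)
    ultimately show False using f[OF that] by simp
  qed
  have distinct: "f a \<noteq> f b" if "a \<in> {1..m}" "b \<in> {1..m}" "a < b" for a b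
  proof
    assume eq: "f a = f b"
    have "Q * b - 1 - (Q * a - 1) = Q * (b - a)"
      using that Q by (simp add: diff_mult_distrib2 Suc_le_eq)
    then have "f a dvd Q * (b - a)"
      using f[of a] f[of b] that eq by (metis atLeastAtMost_iff dvd_diff_nat)
    then have "f a dvd b - a" using f[of a] not_dvd[of a] that by (auto simp: prime_dvd_mult_iff)
    then have "f a \<le> b - a" using that by (simp add: dvd_imp_le)
    moreover have "m \<le> f a" using large f not_dvd that by simp
    ultimately show False using that by simp
  qed
  have "inj_on f {1..m}"
    by (rule inj_onI) (metis distinct linorder_neqE_nat)
  moreover have "f ` {1..m} \<subseteq> {p. prime p \<and> \<not> p dvd Q \<and> p < Q * m}"
  proof safe
    fix i assume i: "i \<in> {1..m}"
    then have "Q \<le> Q * i" "Q * i \<le> Q * m" by simp_all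
    then have "0 < Q * i - 1" using Q by linarith
    then have "f i \<le> Q * i - 1" using f[of i] i by (simp add: dvd_imp_le)
    also have "\<dots> < Q * m" using \<open>Q \<le> Q * i\<close> \<open>Q * i \<le> Q * m\<close> Q by linarith
    finally show "f i < Q * m" .
  qed (use f not_dvd in auto)
  moreover have "finite {p. prime p \<and> \<not> p dvd Q \<and> p < Q * m}" by simp
  ultimately show ?thesis using card_inj_on_le by fastforce
qed

lemma nth_prime_Suc_less_primorial_mult:
  assumes k: "2 \<le> k" "k \<le> r" and m: "r - k + 1 \<le> nth_prime (Suc k)"
  shows "nth_prime (Suc r) < primorial (nth_prime k) * (r - k + 1)"
proof (rule ccontr)
  define Q where "Q = primorial (nth_prime k)"
  define m where "m = r - k + 1"
  assume "\<not> ?thesis"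
  then have Qm: "Q * m \<le> nth_prime (Suc r)" unfolding Q_def m_def by simp
  have dvd_Q_iff: "p dvd Q \<longleftrightarrow> p \<le> nth_prime k" if "prime p" for p
    unfolding Q_def using prime_dvd_primorial_iff[OF that] .
  have "3 \<le> nth_prime k" using k nth_prime_le_iff[of 2 k] nth_prime_values(2) by simp
  then have "3 dvd Q" using dvd_Q_iff[of 3] by simp
  then have "3 \<le> Q" using primorial_pos[of "nth_prime k"] unfolding Q_def by (simp add: dvd_imp_le)
  moreover have "m \<le> p" if "prime p" "\<not> p dvd Q" for p
    using that dvd_Q_iff nth_prime_Suc_le[of p k] m unfolding m_def by simp
  ultimately have "m \<le> card {p. prime p \<and> \<not> p dvd Q \<and> p < Q * m}"
    by (rule card_primes_not_dvd_less)
  also have "\<dots> \<le> card ({p. prime p \<and> p \<le> nth_prime r} - {p. prime p \<and> p \<le> nth_prime k})"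
  proof (rule card_mono)
    show "finite ({p. prime p \<and> p \<le> nth_prime r} - {p. prime p \<and> p \<le> nth_prime k})"
      using finite_primes_le by blast
    show "{p. prime p \<and> \<not> p dvd Q \<and> p < Q * m}
        \<subseteq> {p. prime p \<and> p \<le> nth_prime r} - {p. prime p \<and> p \<le> nth_prime k}"
    proof safe
      fix p assume p: "prime p" "\<not> p dvd Q" "p < Q * m"
      then show "p \<le> nth_prime r" using Qm nth_prime_Suc_le[of p r] by linarith
      show "p \<le> nth_prime k \<Longrightarrow> False" using p dvd_Q_iff by simp
    qed
  qed
  also have "\<dots> = r - k"
  proof -
    have "nth_prime k \<le> nth_prime r" using k nth_prime_le_iff[of k r] by simp
    then have "{p. prime p \<and> p \<le> nth_prime k} \<subseteq> {p. prime p \<and> p \<le> nth_prime r}" by auto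
    then show ?thesis
      using k by (simp add: card_Diff_subset finite_primes_le card_primes_le_nth_prime)
  qed
  finally show False unfolding m_def by simp
qed

lemma twice_sq_nth_prime_Suc_less_primorial_large:
  assumes r: "11 \<le> r"
  shows "2 * nth_prime (Suc r)^2 < primorial (nth_prime r)"
proof -
  define k where "k = (r - 3) div 2"
  have k: "4 \<le> k" "2 * k + 3 \<le> r" "r \<le> 2 * k + 4" using r unfolding k_def by auto
  define a where "a = nth_prime (Suc k)"
  define Q where "Q = primorial (nth_prime k)"
  define R where "R = (\<Prod>i=Suc k..r. nth_prime i)"
  define m where "m = r - k + 1"
  have "2 * k + 1 \<le> a" using nth_prime_lower_bound[of "Suc k"] unfolding a_def by simp
  then have ma: "m \<le> a" and a3: "3 \<le> a" using k unfolding m_def by linarith+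
  have bonse: "nth_prime (Suc r) < Q * m"
    using nth_prime_Suc_less_primorial_mult[of k r] k ma unfolding Q_def m_def a_def by simp
  have split: "primorial (nth_prime r) = Q * R"
    using k prod.ub_add_nat[of 1 k nth_prime "r - k"]
    unfolding Q_def R_def by (simp add: primorial_nth_prime)
  have "Q = (\<Prod>i=1..k. nth_prime i)" unfolding Q_def using k by (simp add: primorial_nth_prime)
  also have "\<dots> \<le> (\<Prod>i=1..k. a)" unfolding a_def by (rule prod_mono) (simp add: nth_prime_le_iff)
  finally have Q: "Q \<le> a ^ k" by simp
  have "(\<Prod>i=Suc k..r. a) \<le> R"
    unfolding R_def a_def by (rule prod_mono) (simp add: nth_prime_le_iff)
  then have R: "a ^ (r - k) \<le> R" by simp
  have "2 * m^2 \<le> 2 * a^2" using ma by (simp add: power_mono)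
  also have "\<dots> < a * a^2" using a3 by simp
  finally have "Q * (2 * m^2) < a ^ k * a ^ 3"
    using Q primorial_pos[of "nth_prime k"] unfolding Q_def
    by (intro mult_le_less_imp_less) (auto simp: power3_eq_cube power2_eq_square)
  also have "\<dots> \<le> a ^ (r - k)"
    using k a3 by (simp flip: power_add add: power_increasing)
  finally have QR: "Q * (2 * m^2) < R" using R by linarith
  have "2 * nth_prime (Suc r)^2 < 2 * (Q * m)^2" using bonse by (simp add: power_strict_mono)
  also have "\<dots> = Q * (Q * (2 * m^2))" by (simp add: power2_eq_square algebra_simps)
  also have "\<dots> < Q * R" using QR primorial_pos[of "nth_prime k"] unfolding Q_def by simp
  finally show ?thesis unfolding split .
qed

lemma twice_sq_nth_prime_Suc_less_primorial:
  assumes r: "5 \<le> r"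
  shows "2 * nth_prime (Suc r)^2 < primorial (nth_prime r)"
proof (cases "11 \<le> r")
  case True
  then show ?thesis by (rule twice_sq_nth_prime_Suc_less_primorial_large)
next
  case False
  then have "nth_prime (Suc r) \<le> 31"
    using nth_prime_le_iff[of "Suc r" 11] nth_prime_values(6) by simp
  then have "nth_prime (Suc r)^2 \<le> 31^2" by (rule power_mono) simp
  moreover have "2 * 31^2 < primorial 11" by (simp only: primorial_code) code_simp
  moreover have "11 \<le> nth_prime r" using r nth_prime_le_iff[of 5 r] nth_prime_values(5) by simp
  then have "primorial 11 \<le> primorial (nth_prime r)"
    by (rule dvd_imp_le[OF primorial_dvd_primorial primorial_pos])
  ultimately show ?thesis by linarith
qed

text \<open>The witness pair only makes the set of gaps nonempty, on which \<open>Max\<close> is meaningful.\<close>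
lemma max_prime_gap_le:
  assumes witness: "prime x" "prime y" "a \<le> x" "x < y" "y \<le> b" "\<forall>s\<in>{x<..<y}. \<not> prime s"
    and window: "\<forall>q\<in>{a..b - c - 1}. \<exists>s\<in>{q+1..q+c}. prime s"
  shows "max_prime_gap a b \<le> c"
proof -
  define S where "S = {q' - q | q q'. prime q \<and> prime q' \<and> a \<le> q \<and> q < q' \<and> q' \<le> b
       \<and> (\<forall>s. q < s \<and> s < q' \<longrightarrow> \<not> prime s)}"
  have "finite S" by (rule finite_subset[of _ "{..b}"]) (auto simp: S_def)
  moreover have "y - x \<in> S"
    unfolding S_def mem_Collect_eq using witness by (intro exI[of _ x] exI[of _ y]) auto
  moreover have "g \<le> c" if "g \<in> S" for g
  proof (rule ccontr)
    obtain q q' where gap: "g = q' - q" "a \<le> q" "q < q'" "q' \<le> b"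
      and no_prime: "\<forall>s. q < s \<and> s < q' \<longrightarrow> \<not> prime s"
      using \<open>g \<in> S\<close> unfolding S_def by blast
    assume "\<not> g \<le> c"
    with gap have "q + c < q'" "q \<in> {a..b - c - 1}" by auto
    then obtain s where "s \<in> {q+1..q+c}" "prime s" using window by blast
    with \<open>q + c < q'\<close> no_prime show False by auto
  qed
  ultimately have "Max S \<le> c" by (subst Max_le_iff) auto
  then show ?thesis unfolding max_prime_gap_def S_def .
qed

theorem mainTheorem2:
  fixes r :: nat
  assumes "r \<ge> 2"
    and "2 * (nth_prime (r+1))^2 \<ge> primorial (nth_prime r)"
  shows "max (nth_prime (r+1) - 1) (d_gap r) = 2 * nth_prime (r - 1)"
proof -
  have "r \<le> 4"
  proof (rule ccontr)
    assume "\<not> r \<le> 4"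
    then have "2 * nth_prime (r+1)^2 < primorial (nth_prime r)"
      using twice_sq_nth_prime_Suc_less_primorial[of r] by simp
    with assms(2) show False by simp
  qed
  with assms(1) consider "r = 2" | "r = 3" | "r = 4" by linarith
  then show ?thesis
  proof cases
    case 1
    have "max_prime_gap 5 25 \<le> 4" by (rule max_prime_gap_le[of 5 7]; code_simp)
    with 1 show ?thesis using nth_prime_values by (simp add: d_gap_def)
  next
    case 2
    have "max_prime_gap 7 49 \<le> 6" by (rule max_prime_gap_le[of 7 11]; code_simp)
    with 2 show ?thesis using nth_prime_values by (simp add: d_gap_def)
  next
    case 3
    have "max_prime_gap 11 121 \<le> 10" by (rule max_prime_gap_le[of 11 13]; code_simp)
    with 3 show ?thesis using nth_prime_values by (simp add: d_gap_def)
  qed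
qed

end
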